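(* Let $(A_1,X_1)$ and $(A_2,X_2)$ be two graphs that cannot be distinguished by the 1-WL algorithm. Then any Graph U-Net-th network computes the same vector representation for them.
   Context: A graph is given by a symmetric adjacency matrix $A$ (possibly a multigraph with nonnegative integer entries) and node features $X$. The 1-WL (color refinement) algorithm starts from initial colors given by node features and iteratively recolors each node by (its current color, multiset of neighbors' current colors, counted with multiplicity) until stable. Two graphs "cannot be distinguished by the 1-WL algorithm" means: running 1-WL on their disjoint union, every stable color class contains the same number of nodes from each graph. A node-level map is 1-WL-bounded if the representation it assigns to a node depends only on the node's stable 1-WL color (computed on the disjoint union of the graphs under consideration); standard message-passing GNN layers are of this type. A Graph U-Net-th pooling layer, with fixed projection vector $p$, threshold $\beta\in\mathbb{R}$ and fixed integer $\ell\ge1$, maps an input $(A,H)$ to $(A^\ell[b,b],\,H[b])$, where $v=Hp$, $b$ is the indicator vector $b_i=1[v_i\ge\beta]$, and $M[b,b]$, $H[b]$ denote restriction to rows/columns with $b_i=1$. A Graph U-Net-th network alternates 1-WL-bounded GNN layers (applied to the current (multi)graph and features) with such pooling layers, and ends with a permutation-invariant readout of the final node representations. *)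

theory Defs
  imports Complex_Main "HOL-Library.Multiset"
begin

text \<open>A (multi)graph with nodes 0,...,nv-1, nonnegative integer adjacency matrix
  and node feature vectors (real lists).\<close>

record graph =
  nv   :: nat
  adj  :: "nat \<Rightarrow> nat \<Rightarrow> nat"
  feat :: "nat \<Rightarrow> real list"

definition symmetric_graph :: "graph \<Rightarrow> bool" where
  "symmetric_graph G \<longleftrightarrow> (\<forall>i<nv G. \<forall>j<nv G. adj G i j = adj G j i)"

text \<open>Colours at round t are represented by the induced partition: wl_rel t x y holds
  iff x and y have the same colour after t rounds. The colour of z is identified with
  its colour class.\<close>

fun wl_rel :: "'v set \<Rightarrow> ('v \<Rightarrow> 'v \<Rightarrow> nat) \<Rightarrow> ('v \<Rightarrow> 'c) \<Rightarrow> nat \<Rightarrow> 'v \<Rightarrow> 'v \<Rightarrow> bool" where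
  "wl_rel V A X 0 x y = (X x = X y)"
| "wl_rel V A X (Suc t) x y =
     (wl_rel V A X t x y \<and>
      (\<Sum>z\<in>V. replicate_mset (A x z) {w\<in>V. wl_rel V A X t z w}) =
      (\<Sum>z\<in>V. replicate_mset (A y z) {w\<in>V. wl_rel V A X t z w}))"

text \<open>Stable colouring: the limit of the refinement (refinement stabilises after
  finitely many rounds, after which the partition no longer changes).\<close>

definition wl_stable :: "'v set \<Rightarrow> ('v \<Rightarrow> 'v \<Rightarrow> nat) \<Rightarrow> ('v \<Rightarrow> 'c) \<Rightarrow> 'v \<Rightarrow> 'v \<Rightarrow> bool" where
  "wl_stable V A X x y \<longleftrightarrow> (\<forall>t. wl_rel V A X t x y)"

definition union_nodes :: "graph \<Rightarrow> graph \<Rightarrow> (nat + nat) set" where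
  "union_nodes G1 G2 = Inl ` {..<nv G1} \<union> Inr ` {..<nv G2}"

fun union_adj :: "graph \<Rightarrow> graph \<Rightarrow> nat + nat \<Rightarrow> nat + nat \<Rightarrow> nat" where
  "union_adj G1 G2 (Inl i) (Inl j) = adj G1 i j"
| "union_adj G1 G2 (Inr i) (Inr j) = adj G2 i j"
| "union_adj G1 G2 _ _ = 0"

fun union_feat :: "graph \<Rightarrow> graph \<Rightarrow> nat + nat \<Rightarrow> real list" where
  "union_feat G1 G2 (Inl i) = feat G1 i"
| "union_feat G1 G2 (Inr i) = feat G2 i"

definition union_stable :: "graph \<Rightarrow> graph \<Rightarrow> nat + nat \<Rightarrow> nat + nat \<Rightarrow> bool" where
  "union_stable G1 G2 = wl_stable (union_nodes G1 G2) (union_adj G1 G2) (union_feat G1 G2)"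

definition wl_indistinguishable :: "graph \<Rightarrow> graph \<Rightarrow> bool" where
  "wl_indistinguishable G1 G2 \<longleftrightarrow>
     (\<forall>x\<in>union_nodes G1 G2.
        card {i. i < nv G1 \<and> union_stable G1 G2 (Inl i) x} =
        card {j. j < nv G2 \<and> union_stable G1 G2 (Inr j) x})"

type_synonym layer = "graph \<Rightarrow> nat \<Rightarrow> real list"

definition wl_bounded :: "layer \<Rightarrow> bool" where
  "wl_bounded f \<longleftrightarrow>
     (\<forall>G1 G2 i j. i < nv G1 \<longrightarrow> j < nv G2 \<longrightarrow> union_stable G1 G2 (Inl i) (Inr j)
        \<longrightarrow> f G1 i = f G2 j)"

definition apply_layer :: "layer \<Rightarrow> graph \<Rightarrow> graph" where
  "apply_layer f G = G\<lparr>feat := f G\<rparr>"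

fun mat_pow :: "nat \<Rightarrow> (nat \<Rightarrow> nat \<Rightarrow> nat) \<Rightarrow> nat \<Rightarrow> nat \<Rightarrow> nat \<Rightarrow> nat" where
  "mat_pow n A 0 i j = (if i = j then 1 else 0)"
| "mat_pow n A (Suc l) i j = (\<Sum>k<n. A i k * mat_pow n A l k j)"

definition score :: "real list \<Rightarrow> real list \<Rightarrow> real" where
  "score p h = sum_list (map2 (*) h p)"   \<comment> \<open>v_i = (H p)_i = <H_i, p>\<close>

definition pool :: "real list \<Rightarrow> real \<Rightarrow> nat \<Rightarrow> graph \<Rightarrow> graph" where
  "pool p \<beta> l G =
     (let s = sorted_list_of_set {i. i < nv G \<and> score p (feat G i) \<ge> \<beta>} in
      \<lparr>nv = length s,
       adj = (\<lambda>a b. mat_pow (nv G) (adj G) l (s ! a) (s ! b)),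
       feat = (\<lambda>a. feat G (s ! a))\<rparr>)"

datatype op = GNN layer | Pool "real list" real nat

fun valid_op :: "op \<Rightarrow> bool" where
  "valid_op (GNN f) = wl_bounded f"
| "valid_op (Pool p \<beta> l) = (l \<ge> 1)"

fun run :: "op list \<Rightarrow> graph \<Rightarrow> graph" where
  "run [] G = G"
| "run (GNN f # ops) G = run ops (apply_layer f G)"
| "run (Pool p \<beta> l # ops) G = run ops (pool p \<beta> l G)"

definition node_reps :: "graph \<Rightarrow> real list list" where
  "node_reps G = map (feat G) [0..<nv G]"

definition perm_invariant :: "(real list list \<Rightarrow> 'r) \<Rightarrow> bool" where
  "perm_invariant R \<longleftrightarrow> (\<forall>xs ys. mset xs = mset ys \<longrightarrow> R xs = R ys)"

definition network_output :: "op list \<Rightarrow> (real list list \<Rightarrow> 'r) \<Rightarrow> graph \<Rightarrow> 'r" where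
  "network_output ops R G = R (node_reps (run ops G))"

end

theory Submission
  imports Defs
begin

text \<open>Call an equivalence relation on the nodes of the disjoint union equitable if related nodes
  carry the same features and send equally many edges (with multiplicity) into every class, and
  balanced if each class contains as many nodes of the first graph as of the second. The stable
  1-WL colouring is equitable and balanced, and every equitable relation refines it. A 1-WL-bounded
  layer only compares nodes of different graphs, but each class of a balanced relation meets both
  graphs, so the layer is constant on classes and the relation stays equitable and balanced. Pooling
  keeps a union of classes, and a relation equitable for A is equitable for every power of A, so its
  restriction is equitable and balanced for the pooled graphs. Finally, a balanced relation refining
  the features forces equal multisets of node features.\<close>

lemma wl_rel_refl: "wl_rel V A X t x x"
  by (induction t) simp_all

lemma wl_rel_sym: "wl_rel V A X t x y \<Longrightarrow> wl_rel V A X t y x"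
  by (induction t arbitrary: x y) (simp_all only: wl_rel.simps)

lemma wl_rel_trans: "wl_rel V A X t x y \<Longrightarrow> wl_rel V A X t y z \<Longrightarrow> wl_rel V A X t x z"
  by (induction t arbitrary: x y z) (simp_all only: wl_rel.simps, metis)

lemma wl_rel_antimono: "t \<le> t' \<Longrightarrow> wl_rel V A X t' x y \<Longrightarrow> wl_rel V A X t x y"
  by (induction t') (auto simp: le_Suc_eq)

lemma wl_stable_refl: "wl_stable V A X x x"
  unfolding wl_stable_def by (simp add: wl_rel_refl)

lemma wl_stable_sym: "wl_stable V A X x y \<Longrightarrow> wl_stable V A X y x"
  unfolding wl_stable_def by (simp add: wl_rel_sym)

lemma wl_stable_trans: "wl_stable V A X x y \<Longrightarrow> wl_stable V A X y z \<Longrightarrow> wl_stable V A X x z"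
  unfolding wl_stable_def by (blast intro: wl_rel_trans)

lemma wl_stable_feat: "wl_stable V A X x y \<Longrightarrow> X x = X y"
  unfolding wl_stable_def by (drule spec[of _ 0]) simp

lemma wl_rel_eventually_stable:
  assumes "finite V"
  obtains T where "\<And>x y. x \<in> V \<Longrightarrow> y \<in> V \<Longrightarrow> wl_rel V A X T x y \<longleftrightarrow> wl_stable V A X x y"
proof -
  define B where "B = {(x, y) \<in> V \<times> V. \<not> wl_stable V A X x y}"
  have "finite B"
    unfolding B_def by (rule finite_subset[OF _ finite_cartesian_product[OF assms assms]]) auto
  have "\<forall>p\<in>B. \<exists>t. \<not> wl_rel V A X t (fst p) (snd p)"
    unfolding B_def wl_stable_def by auto
  then obtain s where s: "\<And>p. p \<in> B \<Longrightarrow> \<not> wl_rel V A X (s p) (fst p) (snd p)"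
    by metis
  define T where "T = Max (insert 0 (s ` B))"
  have not_T: "\<not> wl_rel V A X T x y" if "(x, y) \<in> B" for x y
  proof -
    have "s (x, y) \<le> T"
      unfolding T_def using \<open>finite B\<close> that by auto
    then show ?thesis
      using s[OF that] wl_rel_antimono[OF \<open>s (x, y) \<le> T\<close>, of V A X x y] by auto
  qed
  show ?thesis
  proof (rule that)
    fix x y assume "x \<in> V" "y \<in> V"
    then show "wl_rel V A X T x y \<longleftrightarrow> wl_stable V A X x y"
      using not_T[of x y] unfolding B_def wl_stable_def by blast
  qed
qed

lemma count_sum_replicate_mset:
  "finite V \<Longrightarrow>
   count (\<Sum>z\<in>V. replicate_mset (a z) (f z)) C = (\<Sum>z\<in>V. a z * (if f z = C then 1 else 0))"
  by (auto simp: count_sum intro!: sum.cong)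

lemma sum_mset_image_sum_replicate_mset:
  "finite V \<Longrightarrow>
   sum_mset (image_mset h (\<Sum>z\<in>V. replicate_mset (a z) (f z))) = (\<Sum>z\<in>V. a z * h (f z))"
  by (induction V rule: finite_induct) auto

lemma weighted_sum_eq_if_replicate_sums_eq:
  fixes g :: "'v \<Rightarrow> nat"
  assumes "finite V"
    and msets: "(\<Sum>z\<in>V. replicate_mset (a z) (f z)) = (\<Sum>z\<in>V. replicate_mset (b z) (f z))"
    and g: "\<And>z z'. z \<in> V \<Longrightarrow> z' \<in> V \<Longrightarrow> f z = f z' \<Longrightarrow> g z = g z'"
  shows "(\<Sum>z\<in>V. a z * g z) = (\<Sum>z\<in>V. b z * g z)"
proof -
  define h where "h = g \<circ> inv_into V f"
  have h: "g z = h (f z)" if "z \<in> V" for z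
  proof -
    have "inv_into V f (f z) \<in> V" "f (inv_into V f (f z)) = f z"
      using that by (auto intro: inv_into_into f_inv_into_f)
    then show ?thesis
      unfolding h_def using g[OF that] by simp
  qed
  have "(\<Sum>z\<in>V. a z * g z) = sum_mset (image_mset h (\<Sum>z\<in>V. replicate_mset (a z) (f z)))"
    using assms(1) by (simp add: h sum_mset_image_sum_replicate_mset)
  also have "\<dots> = (\<Sum>z\<in>V. b z * g z)"
    unfolding msets using assms(1) by (simp add: h sum_mset_image_sum_replicate_mset)
  finally show ?thesis .
qed

text \<open>Quantifying over class-invariant weights g avoids naming the classes; for g the indicator
  of a class this says that related nodes send equally many edges into that class.\<close>

definition equitable :: "'v set \<Rightarrow> ('v \<Rightarrow> 'v \<Rightarrow> nat) \<Rightarrow> ('v \<Rightarrow> 'v \<Rightarrow> bool) \<Rightarrow> bool" where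
  "equitable V A P \<longleftrightarrow>
     (\<forall>x y (g :: 'v \<Rightarrow> nat). P x y \<longrightarrow> (\<forall>k k'. P k k' \<longrightarrow> g k = g k') \<longrightarrow>
        (\<Sum>k\<in>V. A x k * g k) = (\<Sum>k\<in>V. A y k * g k))"

lemma equitableI:
  assumes "\<And>x y g. P x y \<Longrightarrow> (\<And>k k'. P k k' \<Longrightarrow> g k = g k') \<Longrightarrow>
             (\<Sum>k\<in>V. A x k * g k) = (\<Sum>k\<in>V. A y k * g k)"
  shows "equitable V A P"
  using assms unfolding equitable_def by blast

lemma equitableD:
  assumes "equitable V A P" "P x y" "\<And>k k'. P k k' \<Longrightarrow> g k = g k'"
  shows "(\<Sum>k\<in>V. A x k * g k) = (\<Sum>k\<in>V. A y k * g k)"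
  using assms unfolding equitable_def by blast

locale equitable_partition =
  fixes V :: "'v set" and A :: "'v \<Rightarrow> 'v \<Rightarrow> nat" and X :: "'v \<Rightarrow> 'c"
    and P :: "'v \<Rightarrow> 'v \<Rightarrow> bool"
  assumes finite_nodes: "finite V"
    and related_nodes: "P x y \<Longrightarrow> x \<in> V \<and> y \<in> V"
    and related_refl: "x \<in> V \<Longrightarrow> P x x"
    and related_sym: "P x y \<Longrightarrow> P y x"
    and related_trans: "P x y \<Longrightarrow> P y z \<Longrightarrow> P x z"
    and related_feat: "P x y \<Longrightarrow> X x = X y"
    and equitable: "equitable V A P"
begin

lemma refines_wl_stable:
  assumes "P x y"
  shows "wl_stable V A X x y"
  unfolding wl_stable_def
proof
  fix t show "wl_rel V A X t x y"
    using assms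
  proof (induction t arbitrary: x y)
    case 0
    then show ?case by (simp add: related_feat)
  next
    case (Suc t)
    define f where "f z = {w\<in>V. wl_rel V A X t z w}" for z
    have f_inv: "f k = f k'" if "P k k'" for k k'
      using Suc.IH[OF that] unfolding f_def by (blast intro: wl_rel_sym wl_rel_trans)
    have "(\<Sum>z\<in>V. replicate_mset (A x z) (f z)) = (\<Sum>z\<in>V. replicate_mset (A y z) (f z))"
    proof (rule multiset_eqI)
      fix C
      have "(\<Sum>k\<in>V. A x k * (if f k = C then 1 else 0)) = (\<Sum>k\<in>V. A y k * (if f k = C then 1 else 0))"
        using equitable Suc.prems by (rule equitableD) (simp add: f_inv)
      then show "count (\<Sum>z\<in>V. replicate_mset (A x z) (f z)) C =
                 count (\<Sum>z\<in>V. replicate_mset (A y z) (f z)) C"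
        using finite_nodes by (simp add: count_sum_replicate_mset)
    qed
    then show ?case
      using Suc f_def by simp
  qed
qed

end

lemma equitable_partition_wl_stable:
  assumes "finite V"
  shows "equitable_partition V A X (\<lambda>x y. x \<in> V \<and> y \<in> V \<and> wl_stable V A X x y)"
proof
  show "finite V" by fact
  show "x \<in> V \<and> y \<in> V" if "x \<in> V \<and> y \<in> V \<and> wl_stable V A X x y" for x y
    using that by simp
  show "x \<in> V \<and> x \<in> V \<and> wl_stable V A X x x" if "x \<in> V" for x
    using that by (simp add: wl_stable_refl)
  show "y \<in> V \<and> x \<in> V \<and> wl_stable V A X y x"
    if "x \<in> V \<and> y \<in> V \<and> wl_stable V A X x y" for x y
    using that by (simp add: wl_stable_sym)
  show "x \<in> V \<and> z \<in> V \<and> wl_stable V A X x z"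
    if "x \<in> V \<and> y \<in> V \<and> wl_stable V A X x y" "y \<in> V \<and> z \<in> V \<and> wl_stable V A X y z"
    for x y z
    using that wl_stable_trans[of V A X x y z] by simp
  show "X x = X y" if "x \<in> V \<and> y \<in> V \<and> wl_stable V A X x y" for x y
    using that wl_stable_feat[of V A X x y] by simp
  obtain T where T: "\<And>x y. x \<in> V \<Longrightarrow> y \<in> V \<Longrightarrow> wl_rel V A X T x y \<longleftrightarrow> wl_stable V A X x y"
    using wl_rel_eventually_stable[OF assms, where A = A and X = X] by blast
  show "equitable V A (\<lambda>x y. x \<in> V \<and> y \<in> V \<and> wl_stable V A X x y)"
  proof (rule equitableI)
    fix x y and g :: "'a \<Rightarrow> nat"
    assume xy: "x \<in> V \<and> y \<in> V \<and> wl_stable V A X x y"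
      and g: "\<And>k k'. k \<in> V \<and> k' \<in> V \<and> wl_stable V A X k k' \<Longrightarrow> g k = g k'"
    define f where "f z = {w\<in>V. wl_rel V A X T z w}" for z
    have "wl_rel V A X (Suc T) x y"
      using xy unfolding wl_stable_def by blast
    then have "(\<Sum>z\<in>V. replicate_mset (A x z) (f z)) = (\<Sum>z\<in>V. replicate_mset (A y z) (f z))"
      unfolding f_def by simp
    moreover have "g z = g z'" if "z \<in> V" "z' \<in> V" "f z = f z'" for z z'
    proof -
      have "z' \<in> f z"
        using that wl_rel_refl unfolding f_def by simp
      then have "wl_stable V A X z z'"
        using T[OF that(1,2)] unfolding f_def by simp
      then show ?thesis
        using g that by blast
    qed
    ultimately show "(\<Sum>k\<in>V. A x k * g k) = (\<Sum>k\<in>V. A y k * g k)"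
      by (rule weighted_sum_eq_if_replicate_sums_eq[OF assms])
  qed
qed

fun adj_pow :: "'v set \<Rightarrow> ('v \<Rightarrow> 'v \<Rightarrow> nat) \<Rightarrow> nat \<Rightarrow> 'v \<Rightarrow> 'v \<Rightarrow> nat" where
  "adj_pow V A 0 x y = (if x = y then 1 else 0)"
| "adj_pow V A (Suc l) x y = (\<Sum>k\<in>V. A x k * adj_pow V A l k y)"

context equitable_partition
begin

lemma equitable_adj_pow: "equitable V (adj_pow V A l) P"
proof (induction l)
  case 0
  show ?case
  proof (rule equitableI)
    fix x y and g :: "'v \<Rightarrow> nat"
    assume xy: "P x y" and g: "\<And>k k'. P k k' \<Longrightarrow> g k = g k'"
    have "(\<Sum>k\<in>V. adj_pow V A 0 z k * g k) = g z" if "z \<in> V" for z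
    proof -
      have "(\<Sum>k\<in>V. adj_pow V A 0 z k * g k) = (\<Sum>k\<in>V. if z = k then g k else 0)"
        by (intro sum.cong) auto
      then show ?thesis
        using finite_nodes that by simp
    qed
    then show "(\<Sum>k\<in>V. adj_pow V A 0 x k * g k) = (\<Sum>k\<in>V. adj_pow V A 0 y k * g k)"
      using related_nodes[OF xy] g[OF xy] by simp
  qed
next
  case (Suc l)
  show ?case
  proof (rule equitableI)
    fix x y and g :: "'v \<Rightarrow> nat"
    assume xy: "P x y" and g: "\<And>k k'. P k k' \<Longrightarrow> g k = g k'"
    define g' where "g' m = (\<Sum>k\<in>V. adj_pow V A l m k * g k)" for m
    have step: "(\<Sum>k\<in>V. adj_pow V A (Suc l) z k * g k) = (\<Sum>m\<in>V. A z m * g' m)" for z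
      unfolding g'_def by (simp add: sum_distrib_left sum_distrib_right mult.assoc) (rule sum.swap)
    have "g' k = g' k'" if "P k k'" for k k'
      unfolding g'_def using Suc.IH that g by (rule equitableD)
    with equitable xy show "(\<Sum>k\<in>V. adj_pow V A (Suc l) x k * g k) = (\<Sum>k\<in>V. adj_pow V A (Suc l) y k * g k)"
      unfolding step by (rule equitableD)
  qed
qed

lemma equitable_partition_adj_pow: "equitable_partition V (adj_pow V A l) X P"
  using finite_nodes related_nodes related_refl related_sym related_trans related_feat equitable_adj_pow
  by unfold_locales

lemma equitable_partition_embedding:
  assumes inj: "inj_on e V'" and image: "e ` V' = K" and "K \<subseteq> V"
    and closed: "\<And>w w'. P w w' \<Longrightarrow> w \<in> K \<Longrightarrow> w' \<in> K"
  shows "equitable_partition V' (\<lambda>x z. A (e x) (e z)) (\<lambda>x. X (e x))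
           (\<lambda>x y. x \<in> V' \<and> y \<in> V' \<and> P (e x) (e y))"
proof
  have "finite K"
    using finite_nodes \<open>K \<subseteq> V\<close> by (rule finite_subset[rotated])
  then show "finite V'"
    using inj image finite_imageD by blast
  show "equitable V' (\<lambda>x z. A (e x) (e z)) (\<lambda>x y. x \<in> V' \<and> y \<in> V' \<and> P (e x) (e y))"
  proof (rule equitableI)
    fix x y and g :: "'a \<Rightarrow> nat"
    assume xy: "x \<in> V' \<and> y \<in> V' \<and> P (e x) (e y)"
      and g: "\<And>k k'. k \<in> V' \<and> k' \<in> V' \<and> P (e k) (e k') \<Longrightarrow> g k = g k'"
    define G where "G w = (if w \<in> K then g (inv_into V' e w) else 0)" for w
    have G_inv: "G w = G w'" if "P w w'" for w w'
    proof (cases "w \<in> K")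
      case True
      then have "w' \<in> K"
        using closed that by blast
      with True have "inv_into V' e w \<in> V'" "inv_into V' e w' \<in> V'"
        "e (inv_into V' e w) = w" "e (inv_into V' e w') = w'"
        using image by (auto intro: inv_into_into f_inv_into_f)
      then show ?thesis
        unfolding G_def using True \<open>w' \<in> K\<close> that g[of "inv_into V' e w" "inv_into V' e w'"]
        by simp
    next
      case False
      then have "w' \<notin> K"
        using closed related_sym that by blast
      with False show ?thesis
        unfolding G_def by simp
    qed
    have sum_K: "(\<Sum>z\<in>V'. A (e u) (e z) * g z) = (\<Sum>w\<in>V. A (e u) w * G w)" for u
    proof -
      have "(\<Sum>z\<in>V'. A (e u) (e z) * g z) = (\<Sum>z\<in>V'. A (e u) (e z) * G (e z))"
        using inj image by (intro sum.cong) (auto simp: G_def)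
      also have "\<dots> = (\<Sum>w\<in>K. A (e u) w * G w)"
        using sum.reindex[OF inj, of "\<lambda>w. A (e u) w * G w"] image by simp
      also have "\<dots> = (\<Sum>w\<in>V. A (e u) w * G w)"
        using finite_nodes \<open>K \<subseteq> V\<close> by (intro sum.mono_neutral_left) (auto simp: G_def)
      finally show ?thesis .
    qed
    show "(\<Sum>z\<in>V'. A (e x) (e z) * g z) = (\<Sum>z\<in>V'. A (e y) (e z) * g z)"
      unfolding sum_K using equitableD[OF equitable, of "e x" "e y" G] xy G_inv by blast
  qed
  show "x \<in> V' \<and> x \<in> V' \<and> P (e x) (e x)" if "x \<in> V'" for x
    using that image \<open>K \<subseteq> V\<close> related_refl by blast
  show "y \<in> V' \<and> x \<in> V' \<and> P (e y) (e x)" if "x \<in> V' \<and> y \<in> V' \<and> P (e x) (e y)" for x y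
    using that related_sym[of "e x" "e y"] by simp
  show "x \<in> V' \<and> z \<in> V' \<and> P (e x) (e z)"
    if "x \<in> V' \<and> y \<in> V' \<and> P (e x) (e y)" "y \<in> V' \<and> z \<in> V' \<and> P (e y) (e z)" for x y z
    using that related_trans[of "e x" "e y" "e z"] by simp
  show "X (e x) = X (e y)" if "x \<in> V' \<and> y \<in> V' \<and> P (e x) (e y)" for x y
    using that related_feat[of "e x" "e y"] by simp
qed simp

end

lemma in_union_nodes [simp]:
  "Inl i \<in> union_nodes G1 G2 \<longleftrightarrow> i < nv G1"
  "Inr j \<in> union_nodes G1 G2 \<longleftrightarrow> j < nv G2"
  unfolding union_nodes_def by auto

lemma finite_union_nodes: "finite (union_nodes G1 G2)"
  unfolding union_nodes_def by simp

lemma sum_union_nodes: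
  "(\<Sum>k\<in>union_nodes G1 G2. f k) = (\<Sum>i<nv G1. f (Inl i)) + (\<Sum>j<nv G2. f (Inr j))"
  unfolding union_nodes_def by (subst sum.union_disjoint) (auto simp: sum.reindex)

lemma adj_pow_union_adj_cross [simp]:
  "adj_pow (union_nodes G1 G2) (union_adj G1 G2) l (Inl i) (Inr j) = 0"
  "adj_pow (union_nodes G1 G2) (union_adj G1 G2) l (Inr j) (Inl i) = 0"
  by (induction l arbitrary: i j) (auto simp: sum_union_nodes)

lemma adj_pow_union_adj [simp]:
  "adj_pow (union_nodes G1 G2) (union_adj G1 G2) l (Inl i) (Inl i') = mat_pow (nv G1) (adj G1) l i i'"
  "adj_pow (union_nodes G1 G2) (union_adj G1 G2) l (Inr j) (Inr j') = mat_pow (nv G2) (adj G2) l j j'"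
  by (induction l arbitrary: i j) (auto simp: sum_union_nodes)

definition balanced :: "graph \<Rightarrow> graph \<Rightarrow> (nat + nat \<Rightarrow> nat + nat \<Rightarrow> bool) \<Rightarrow> bool" where
  "balanced G1 G2 P \<longleftrightarrow>
     (\<forall>x\<in>union_nodes G1 G2.
        card {i. i < nv G1 \<and> P (Inl i) x} = card {j. j < nv G2 \<and> P (Inr j) x})"

definition equitably_balanced :: "graph \<Rightarrow> graph \<Rightarrow> bool" where
  "equitably_balanced G1 G2 \<longleftrightarrow>
     (\<exists>P. equitable_partition (union_nodes G1 G2) (union_adj G1 G2) (union_feat G1 G2) P \<and>
          balanced G1 G2 P)"

lemma equitably_balanced_if_wl_indistinguishable:
  assumes "wl_indistinguishable G1 G2"
  shows "equitably_balanced G1 G2"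
proof -
  let ?P = "\<lambda>x y. x \<in> union_nodes G1 G2 \<and> y \<in> union_nodes G1 G2 \<and> union_stable G1 G2 x y"
  have "equitable_partition (union_nodes G1 G2) (union_adj G1 G2) (union_feat G1 G2) ?P"
    unfolding union_stable_def by (rule equitable_partition_wl_stable[OF finite_union_nodes])
  moreover have "balanced G1 G2 ?P"
    using assms unfolding balanced_def wl_indistinguishable_def by (simp cong: conj_cong)
  ultimately show ?thesis
    unfolding equitably_balanced_def by blast
qed

lemma balanced_class_meets_both:
  assumes "equitable_partition (union_nodes G1 G2) A X P" "balanced G1 G2 P"
    and "x \<in> union_nodes G1 G2"
  shows "\<exists>i<nv G1. P (Inl i) x" and "\<exists>j<nv G2. P (Inr j) x"
proof -
  interpret equitable_partition "union_nodes G1 G2" A X P by fact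
  let ?C1 = "{i. i < nv G1 \<and> P (Inl i) x}" and ?C2 = "{j. j < nv G2 \<and> P (Inr j) x}"
  have "finite ?C1" "finite ?C2"
    by simp_all
  have "?C1 \<noteq> {} \<or> ?C2 \<noteq> {}"
  proof (cases x)
    case (Inl i)
    then have "i \<in> ?C1"
      using assms(3) related_refl[OF assms(3)] by simp
    then show ?thesis by blast
  next
    case (Inr j)
    then have "j \<in> ?C2"
      using assms(3) related_refl[OF assms(3)] by simp
    then show ?thesis by blast
  qed
  moreover have "card ?C1 = card ?C2"
    using assms(2,3) unfolding balanced_def by blast
  moreover have "card ?C1 = 0 \<longleftrightarrow> ?C1 = {}" "card ?C2 = 0 \<longleftrightarrow> ?C2 = {}"
    by (simp_all only: card_0_eq \<open>finite ?C1\<close> \<open>finite ?C2\<close>)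
  ultimately have "?C1 \<noteq> {}" "?C2 \<noteq> {}"
    by argo+
  then show "\<exists>i<nv G1. P (Inl i) x" "\<exists>j<nv G2. P (Inr j) x"
    by auto
qed

lemma union_nodes_apply_layer [simp]:
  "union_nodes (apply_layer f G1) (apply_layer f G2) = union_nodes G1 G2"
  by (simp add: union_nodes_def apply_layer_def)

lemma union_adj_apply_layer [simp]:
  "union_adj (apply_layer f G1) (apply_layer f G2) = union_adj G1 G2"
proof (intro ext)
  show "union_adj (apply_layer f G1) (apply_layer f G2) x z = union_adj G1 G2 x z" for x z
    by (cases x; cases z) (simp_all add: apply_layer_def)
qed

lemma nv_apply_layer [simp]: "nv (apply_layer f G) = nv G"
  by (simp add: apply_layer_def)

lemma union_feat_apply_layer_related:
  assumes part: "equitable_partition (union_nodes G1 G2) (union_adj G1 G2) (union_feat G1 G2) P"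
    and bal: "balanced G1 G2 P" and f: "wl_bounded f" and "P x y"
  shows "union_feat (apply_layer f G1) (apply_layer f G2) x =
         union_feat (apply_layer f G1) (apply_layer f G2) y"
proof -
  interpret equitable_partition "union_nodes G1 G2" "union_adj G1 G2" "union_feat G1 G2" P
    by (fact part)
  let ?F = "union_feat (apply_layer f G1) (apply_layer f G2)"
  have cross: "f G1 i = f G2 j" if "P (Inl i) (Inr j)" for i j
    using f related_nodes[OF that] refines_wl_stable[OF that]
    unfolding wl_bounded_def union_stable_def by simp
  have F_Inr: "?F z = f G2 j" if zj: "P z (Inr j)" for z j
  proof (cases z)
    case (Inl i)
    then show ?thesis
      using cross zj by (simp add: apply_layer_def)
  next
    case (Inr j')
    obtain i where ij': "P (Inl i) (Inr j')"
      using balanced_class_meets_both(1)[OF part bal] related_nodes[OF zj] Inr by blast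
    then have "P (Inl i) (Inr j)"
      using related_trans zj Inr by simp
    then show ?thesis
      using cross[OF ij'] cross Inr by (simp add: apply_layer_def)
  qed
  obtain j where "P (Inr j) x"
    using balanced_class_meets_both(2)[OF part bal] related_nodes[OF \<open>P x y\<close>] by blast
  then have "P x (Inr j)" "P y (Inr j)"
    using related_sym related_trans[OF related_sym[OF \<open>P x y\<close>]] by blast+
  then show ?thesis
    using F_Inr by simp
qed

lemma equitably_balanced_apply_layer:
  assumes "equitably_balanced G1 G2" "wl_bounded f"
  shows "equitably_balanced (apply_layer f G1) (apply_layer f G2)"
proof -
  obtain P where part: "equitable_partition (union_nodes G1 G2) (union_adj G1 G2) (union_feat G1 G2) P"
    and bal: "balanced G1 G2 P"
    using assms(1) unfolding equitably_balanced_def by blast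
  interpret equitable_partition "union_nodes G1 G2" "union_adj G1 G2" "union_feat G1 G2" P
    by (fact part)
  have "equitable_partition (union_nodes G1 G2) (union_adj G1 G2)
          (union_feat (apply_layer f G1) (apply_layer f G2)) P"
    using finite_nodes related_nodes related_refl related_sym related_trans equitable
      union_feat_apply_layer_related[OF part bal assms(2)]
    by unfold_locales
  moreover have "balanced (apply_layer f G1) (apply_layer f G2) P"
    using bal unfolding balanced_def by simp
  ultimately show ?thesis
    unfolding equitably_balanced_def by auto
qed

lemma card_nth_Collect:
  assumes "distinct xs" "\<And>i. R i \<Longrightarrow> i \<in> set xs"
  shows "card {a. a < length xs \<and> R (xs ! a)} = card {i. R i}"
proof -
  have "{i. R i} = (!) xs ` {a. a < length xs \<and> R (xs ! a)}"
    using assms(2) by (auto simp: in_set_conv_nth)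
  moreover have "inj_on ((!) xs) {a. a < length xs \<and> R (xs ! a)}"
    using assms(1) by (intro inj_on_nth) auto
  ultimately show ?thesis
    by (simp add: card_image)
qed

definition kept_nodes :: "real list \<Rightarrow> real \<Rightarrow> graph \<Rightarrow> nat list" where
  "kept_nodes p \<beta> G = sorted_list_of_set {i. i < nv G \<and> \<beta> \<le> score p (feat G i)}"

lemma set_kept_nodes: "set (kept_nodes p \<beta> G) = {i. i < nv G \<and> \<beta> \<le> score p (feat G i)}"
  by (simp add: kept_nodes_def)

lemma distinct_kept_nodes: "distinct (kept_nodes p \<beta> G)"
  by (simp add: kept_nodes_def)

lemma pool_kept_nodes:
  "nv (pool p \<beta> l G) = length (kept_nodes p \<beta> G)"
  "adj (pool p \<beta> l G) a b = mat_pow (nv G) (adj G) l (kept_nodes p \<beta> G ! a) (kept_nodes p \<beta> G ! b)"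
  "feat (pool p \<beta> l G) a = feat G (kept_nodes p \<beta> G ! a)"
  unfolding pool_def kept_nodes_def Let_def by simp_all

definition pool_embedding :: "real list \<Rightarrow> real \<Rightarrow> graph \<Rightarrow> graph \<Rightarrow> nat + nat \<Rightarrow> nat + nat" where
  "pool_embedding p \<beta> G1 G2 = map_sum ((!) (kept_nodes p \<beta> G1)) ((!) (kept_nodes p \<beta> G2))"

lemma union_adj_pool:
  "union_adj (pool p \<beta> l G1) (pool p \<beta> l G2) =
   (\<lambda>x z. adj_pow (union_nodes G1 G2) (union_adj G1 G2) l
            (pool_embedding p \<beta> G1 G2 x) (pool_embedding p \<beta> G1 G2 z))"
proof (intro ext)
  show "union_adj (pool p \<beta> l G1) (pool p \<beta> l G2) x z =
        adj_pow (union_nodes G1 G2) (union_adj G1 G2) l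
          (pool_embedding p \<beta> G1 G2 x) (pool_embedding p \<beta> G1 G2 z)" for x z
    by (cases x; cases z) (simp_all add: pool_kept_nodes pool_embedding_def)
qed

lemma union_feat_pool:
  "union_feat (pool p \<beta> l G1) (pool p \<beta> l G2) = (\<lambda>x. union_feat G1 G2 (pool_embedding p \<beta> G1 G2 x))"
proof (intro ext)
  show "union_feat (pool p \<beta> l G1) (pool p \<beta> l G2) x = union_feat G1 G2 (pool_embedding p \<beta> G1 G2 x)" for x
    by (cases x) (simp_all add: pool_kept_nodes pool_embedding_def)
qed

lemma bij_betw_pool_embedding:
  "bij_betw (pool_embedding p \<beta> G1 G2) (union_nodes (pool p \<beta> l G1) (pool p \<beta> l G2))
     {w \<in> union_nodes G1 G2. \<beta> \<le> score p (union_feat G1 G2 w)}"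
proof (rule bij_betw_imageI)
  let ?s1 = "kept_nodes p \<beta> G1" and ?s2 = "kept_nodes p \<beta> G2"
  have "inj_on ((!) ?s1) {..<length ?s1}" "inj_on ((!) ?s2) {..<length ?s2}"
    by (simp_all add: inj_on_nth distinct_kept_nodes)
  then show "inj_on (pool_embedding p \<beta> G1 G2) (union_nodes (pool p \<beta> l G1) (pool p \<beta> l G2))"
    unfolding pool_embedding_def union_nodes_def pool_kept_nodes
    by (auto simp: inj_on_def)
  have "(!) ?s1 ` {..<length ?s1} = set ?s1" "(!) ?s2 ` {..<length ?s2} = set ?s2"
    by (auto simp: in_set_conv_nth)
  then show "pool_embedding p \<beta> G1 G2 ` union_nodes (pool p \<beta> l G1) (pool p \<beta> l G2) =
             {w \<in> union_nodes G1 G2. \<beta> \<le> score p (union_feat G1 G2 w)}"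
    unfolding pool_embedding_def union_nodes_def pool_kept_nodes image_Un image_image
    by (auto simp: set_kept_nodes image_iff)
qed

lemma equitably_balanced_pool:
  assumes "equitably_balanced G1 G2"
  shows "equitably_balanced (pool p \<beta> l G1) (pool p \<beta> l G2)"
proof -
  obtain P where part: "equitable_partition (union_nodes G1 G2) (union_adj G1 G2) (union_feat G1 G2) P"
    and bal: "balanced G1 G2 P"
    using assms unfolding equitably_balanced_def by blast
  interpret equitable_partition "union_nodes G1 G2" "union_adj G1 G2" "union_feat G1 G2" P
    by (fact part)
  define e where "e = pool_embedding p \<beta> G1 G2"
  define K where "K = {w \<in> union_nodes G1 G2. \<beta> \<le> score p (union_feat G1 G2 w)}"
  let ?V' = "union_nodes (pool p \<beta> l G1) (pool p \<beta> l G2)"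
  define P' where "P' x y \<longleftrightarrow> x \<in> ?V' \<and> y \<in> ?V' \<and> P (e x) (e y)" for x y
  have bij: "bij_betw e ?V' K"
    unfolding e_def K_def by (rule bij_betw_pool_embedding)
  have closed: "w' \<in> K" if "P w w'" "w \<in> K" for w w'
    using that related_nodes[OF that(1)] related_feat[OF that(1)] unfolding K_def by simp
  have "equitable_partition (union_nodes G1 G2) (adj_pow (union_nodes G1 G2) (union_adj G1 G2) l)
          (union_feat G1 G2) P"
    by (rule equitable_partition_adj_pow)
  then have "equitable_partition ?V' (union_adj (pool p \<beta> l G1) (pool p \<beta> l G2))
          (union_feat (pool p \<beta> l G1) (pool p \<beta> l G2)) P'"
    unfolding union_adj_pool union_feat_pool P'_def e_def[symmetric]
    by (rule equitable_partition.equitable_partition_embedding)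
      (use bij closed in \<open>auto simp: K_def bij_betw_def\<close>)
  moreover have "balanced (pool p \<beta> l G1) (pool p \<beta> l G2) P'"
    unfolding balanced_def
  proof
    fix x assume x: "x \<in> ?V'"
    then have ex: "e x \<in> K"
      using bij_betwE[OF bij] by blast
    have side: "card {a. a < length s \<and> P (c (s ! a)) (e x)} = card {i. P (c i) (e x)}"
      if "distinct s" "\<And>i. c i \<in> K \<Longrightarrow> i \<in> set s" for s and c :: "nat \<Rightarrow> nat + nat"
      using that(1) by (rule card_nth_Collect) (use that(2) closed related_sym ex in blast)
    have "Inl i \<in> K \<Longrightarrow> i \<in> set (kept_nodes p \<beta> G1)"
      and "Inr j \<in> K \<Longrightarrow> j \<in> set (kept_nodes p \<beta> G2)" for i j
      by (simp_all add: K_def set_kept_nodes)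
    note sides = this[THEN side[OF distinct_kept_nodes]]
    have P'_Inl: "P' (Inl a) x \<longleftrightarrow> a < nv (pool p \<beta> l G1) \<and> P (Inl (kept_nodes p \<beta> G1 ! a)) (e x)"
      and P'_Inr: "P' (Inr b) x \<longleftrightarrow> b < nv (pool p \<beta> l G2) \<and> P (Inr (kept_nodes p \<beta> G2 ! b)) (e x)"
      for a b
      using x by (simp_all add: P'_def e_def pool_embedding_def)
    have "card {a. a < nv (pool p \<beta> l G1) \<and> P' (Inl a) x} = card {i. P (Inl i) (e x)}"
      using sides(1) by (simp add: P'_Inl pool_kept_nodes cong: conj_cong)
    also have "\<dots> = card {i. i < nv G1 \<and> P (Inl i) (e x)}"
      using related_nodes by (metis in_union_nodes(1))
    also have "\<dots> = card {j. j < nv G2 \<and> P (Inr j) (e x)}"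
      using bal ex unfolding balanced_def K_def by blast
    also have "\<dots> = card {j. P (Inr j) (e x)}"
      using related_nodes by (metis in_union_nodes(2))
    also have "\<dots> = card {a. a < nv (pool p \<beta> l G2) \<and> P' (Inr a) x}"
      using sides(2) by (simp add: P'_Inr pool_kept_nodes cong: conj_cong)
    finally show "card {a. a < nv (pool p \<beta> l G1) \<and> P' (Inl a) x} =
                  card {a. a < nv (pool p \<beta> l G2) \<and> P' (Inr a) x}" .
  qed
  ultimately show ?thesis
    unfolding equitably_balanced_def by blast
qed

lemma equitably_balanced_run:
  assumes "\<forall>q\<in>set ops. valid_op q" and "equitably_balanced G1 G2"
  shows "equitably_balanced (run ops G1) (run ops G2)"
  using assms
proof (induction ops arbitrary: G1 G2)
  case Nil
  then show ?case by simp
next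
  case (Cons q ops)
  then show ?case
    by (cases q) (simp_all add: equitably_balanced_apply_layer equitably_balanced_pool)
qed

lemma balanced_card_closed_subset:
  assumes part: "equitable_partition (union_nodes G1 G2) A X P" and bal: "balanced G1 G2 P"
    and T: "T \<subseteq> union_nodes G1 G2" and closed: "\<And>w w'. P w w' \<Longrightarrow> w \<in> T \<Longrightarrow> w' \<in> T"
  shows "card {i. i < nv G1 \<and> Inl i \<in> T} = card {j. j < nv G2 \<and> Inr j \<in> T}"
proof -
  interpret equitable_partition "union_nodes G1 G2" A X P by fact
  define cl where "cl w = {u. P w u}" for w
  define S1 where "S1 = {i. i < nv G1 \<and> Inl i \<in> T}"
  define S2 where "S2 = {j. j < nv G2 \<and> Inr j \<in> T}"
  have "finite T"
    using T finite_union_nodes by (rule finite_subset)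
  have cl_eq: "cl u = cl w \<longleftrightarrow> P u w" if "w \<in> T" for u w
  proof
    assume "cl u = cl w"
    moreover have "w \<in> cl w"
      using related_refl that T unfolding cl_def by blast
    ultimately have "w \<in> cl u"
      by simp
    then show "P u w"
      unfolding cl_def by simp
  next
    assume "P u w"
    then show "cl u = cl w"
      unfolding cl_def using related_trans[OF \<open>P u w\<close>] related_trans[OF related_sym[OF \<open>P u w\<close>]]
      by blast
  qed
  have into_T: "u \<in> T" if "P u w" "w \<in> T" for u w
    using closed[OF related_sym[OF that(1)] that(2)] .
  have class_card:
    "card {i \<in> S1. cl (Inl i) = cl w} = card {i. i < nv G1 \<and> P (Inl i) w}"
    "card {j \<in> S2. cl (Inr j) = cl w} = card {j. j < nv G2 \<and> P (Inr j) w}"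
    if "w \<in> T" for w
  proof -
    have "{i \<in> S1. cl (Inl i) = cl w} = {i. i < nv G1 \<and> P (Inl i) w}"
      "{j \<in> S2. cl (Inr j) = cl w} = {j. j < nv G2 \<and> P (Inr j) w}"
      using cl_eq[OF that] into_T[OF _ that] unfolding S1_def S2_def by blast+
    then show "card {i \<in> S1. cl (Inl i) = cl w} = card {i. i < nv G1 \<and> P (Inl i) w}"
      "card {j \<in> S2. cl (Inr j) = cl w} = card {j. j < nv G2 \<and> P (Inr j) w}"
      by simp_all
  qed
  have "card S1 = (\<Sum>C\<in>cl ` T. card {i \<in> S1. cl (Inl i) = C})"
    unfolding card_eq_sum
    by (rule sum.group[symmetric]) (use \<open>finite T\<close> in \<open>auto simp: S1_def\<close>)
  also have "\<dots> = (\<Sum>C\<in>cl ` T. card {j \<in> S2. cl (Inr j) = C})"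
    using class_card bal T unfolding balanced_def by (intro sum.cong) auto
  also have "\<dots> = card S2"
    unfolding card_eq_sum
    by (rule sum.group) (use \<open>finite T\<close> in \<open>auto simp: S2_def\<close>)
  finally show ?thesis
    unfolding S1_def S2_def .
qed

lemma count_mset_node_reps: "count (mset (node_reps G)) v = card {i. i < nv G \<and> feat G i = v}"
  unfolding node_reps_def count_mset count_list_eq_length_filter length_filter_conv_card
  by (auto intro: arg_cong[where f = card])

lemma mset_node_reps_eq_if_equitably_balanced:
  assumes "equitably_balanced G1 G2"
  shows "mset (node_reps G1) = mset (node_reps G2)"
proof (rule multiset_eqI)
  fix v
  obtain P where part: "equitable_partition (union_nodes G1 G2) (union_adj G1 G2) (union_feat G1 G2) P"
    and bal: "balanced G1 G2 P"
    using assms unfolding equitably_balanced_def by blast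
  define T where "T = {w \<in> union_nodes G1 G2. union_feat G1 G2 w = v}"
  have "card {i. i < nv G1 \<and> Inl i \<in> T} = card {j. j < nv G2 \<and> Inr j \<in> T}"
    using part bal
  proof (rule balanced_card_closed_subset)
    show "T \<subseteq> union_nodes G1 G2"
      unfolding T_def by blast
    show "w' \<in> T" if "P w w'" "w \<in> T" for w w'
      using that equitable_partition.related_nodes[OF part that(1)]
        equitable_partition.related_feat[OF part that(1)]
      unfolding T_def by simp
  qed
  then show "count (mset (node_reps G1)) v = count (mset (node_reps G2)) v"
    unfolding count_mset_node_reps T_def by simp
qed

theorem theorem2:
  fixes G1 G2 :: graph and ops :: "op list" and R :: "real list list \<Rightarrow> 'r"
  assumes "symmetric_graph G1" and "symmetric_graph G2"
    and "wl_indistinguishable G1 G2"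
    and "\<forall>q\<in>set ops. valid_op q"
    and "perm_invariant R"
  shows "network_output ops R G1 = network_output ops R G2"
proof -
  have "equitably_balanced (run ops G1) (run ops G2)"
    using assms(4) equitably_balanced_if_wl_indistinguishable[OF assms(3)]
    by (rule equitably_balanced_run)
  then have "mset (node_reps (run ops G1)) = mset (node_reps (run ops G2))"
    by (rule mset_node_reps_eq_if_equitably_balanced)
  then show ?thesis
    using assms(5) unfolding network_output_def perm_invariant_def by blast
qed

end
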